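(* Let $\mathbf b\in\mathrm{Comp}_{p,n}$ and $\boldsymbol\lambda\in\mathcal P_{d,\mathbf b}$, let $o_{\boldsymbol\lambda}=\min\{k\ge1:\boldsymbol\lambda^{[k+t]}=\boldsymbol\lambda^{[t]}\ \forall t\}$, $p_{\boldsymbol\lambda}=p/o_{\boldsymbol\lambda}$, $n_{\boldsymbol\lambda}=n/p_{\boldsymbol\lambda}$, and $\sqrt{\boldsymbol\lambda}=(\boldsymbol\lambda^{[1]},\dots,\boldsymbol\lambda^{[o_{\boldsymbol\lambda}]})$ (the first $do_{\boldsymbol\lambda}$ components of $\boldsymbol\lambda$). Then the numbers $\gamma_{\mathbf b}(\sqrt{\boldsymbol\lambda})=\big(\ell(w_{\mathbf b})+\sum_{a=1}^p\beta(\overrightarrow{\boldsymbol\lambda^{[a]}})-\beta(\overrightarrow{\boldsymbol\lambda})\big)/p_{\boldsymbol\lambda}$ and $\alpha(\boldsymbol\lambda)=\frac12 n_{\boldsymbol\lambda}(rp-do_{\boldsymbol\lambda})-d\alpha(\mathbf b)/p_{\boldsymbol\lambda}$ are integers, and setting $$g_{\boldsymbol\lambda}=\dot\varepsilon^{\alpha(\boldsymbol\lambda)}\dot q^{\gamma_{\mathbf b}(\sqrt{\boldsymbol\lambda})}(\dot Q_1\cdots\dot Q_d)^{n_{\boldsymbol\lambda}(p-1)}\prod_{(i,j,s)\in[\sqrt{\boldsymbol\lambda}]}\ \prod_{1\le t\le do_{\boldsymbol\lambda}}\ \prod_{\substack{0\le a<p_{\boldsymbol\lambda}\\ a\ne0\text{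 if }p_t=p_s}}\big(\dot\varepsilon^{ao_{\boldsymbol\lambda}}h^{\boldsymbol\lambda}_{ij}(s,t)-1\big)$$ one has $g_{\boldsymbol\lambda}\in\mathbb Z[\dot\varepsilon,\dot q^{\pm1},\dot Q_1^{\pm1},\dots,\dot Q_d^{\pm1}]$ and $$f_{\boldsymbol\lambda}=\dot\varepsilon^{\frac12 do_{\boldsymbol\lambda}n(1-p_{\boldsymbol\lambda})}\,g_{\boldsymbol\lambda}^{\,p_{\boldsymbol\lambda}}.$$
   Context: Setting: $p>1$, $d\ge1$, $n\ge3$, $r=pd$; $\mathcal F=\mathbb Q(\dot\varepsilon,\dot q,\dot Q_1,\dots,\dot Q_d)$, $\dot\varepsilon\in\mathbb C$ a primitive $p$th root of unity, $\dot q,\dot Q_i$ indeterminates. $\mathbf b=(b_1,\dots,b_p)$ is a composition of $n$ into $p$ nonnegative parts, $\alpha(\mathbf b)=\sum_iib_i$, $\ell(w_{\mathbf b})=\sum_{i<j}b_ib_j$. For an $r$-multipartition $\boldsymbol\lambda=(\lambda^{(1)},\dots,\lambda^{(r)})$, $\boldsymbol\lambda^{[t]}=(\lambda^{(dt-d+1)},\dots,\lambda^{(dt)})$ with $\boldsymbol\lambda^{[t+kp]}=\boldsymbol\lambda^{[t]}$; $\mathcal P_{d,\mathbf b}$ is the set of $\boldsymbol\lambda$ with $|\boldsymbol\lambda^{[t]}|=b_t$. $f_{\boldsymbol\lambda}$ is the explicit element $f_{\boldsymbol\lambda}=\dot\varepsilon^{\frac12 rn(p-1)-d\alpha(\mathbf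 b)}\dot q^{\ell(w_{\mathbf b})-\beta(\overrightarrow{\boldsymbol\lambda})+\sum_a\beta(\overrightarrow{\boldsymbol\lambda^{[a]}})}(\dot Q_1\cdots\dot Q_d)^{n(p-1)}\prod_{(i,j,s)\in[\boldsymbol\lambda]}\prod_{1\le t\le r,\,p_t\ne p_s}(h^{\boldsymbol\lambda}_{ij}(s,t)-1)$, which is the scalar by which the central element $z_{\mathbf b}$ of $\mathcal H_{d,\mathbf b}$ acts on the Specht module $S_{\mathbf b}(\boldsymbol\lambda)$. Notation: $\beta(\lambda)=\sum_i(i-1)\lambda_i$ for a partition; $\overrightarrow{\boldsymbol\mu}$ is the partition formed by all parts of all components of $\boldsymbol\mu$ sorted decreasingly; $[\boldsymbol\mu]=\{(i,j,s):1\le j\le\mu^{(s)}_i\}$; $h_{ij}(\lambda,\mu)=\lambda_i-i+\mu'_j-j+1$; each $1\le s\le r$ is written $s=d(p_s-1)+d_s$ with $1\le p_s\le p$, $1\le d_s\le d$; $h^{\boldsymbol\lambda}_{ij}(s,t)=\dot\varepsilon^{p_s-p_t}\dot q^{h_{ij}(\lambda^{(s)},\lambda^{(t)})}\dot Q_{d_s}\dot Q_{d_t}^{-1}$. *)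

theory Defs
  imports Complex_Main
begin

definition is_partition :: "nat list \<Rightarrow> bool" where
  "is_partition l \<longleftrightarrow> sorted_wrt (\<ge>) l \<and> (\<forall>x\<in>set l. 0 < x)"

text \<open>lambda_i for i >= 1 (0 beyond the length)\<close>
definition part :: "nat list \<Rightarrow> nat \<Rightarrow> nat" where
  "part l i = (if 1 \<le> i \<and> i \<le> length l then l ! (i - 1) else 0)"

definition conjp :: "nat list \<Rightarrow> nat \<Rightarrow> nat" where
  "conjp l j = length (filter (\<lambda>x. j \<le> x) l)"

definition beta :: "nat list \<Rightarrow> nat" where
  "beta l = (\<Sum>i<length l. i * l ! i)"

definition hook :: "nat list \<Rightarrow> nat list \<Rightarrow> nat \<Rightarrow> nat \<Rightarrow> int" where
  "hook l m i j = int (part l i) - int i + int (conjp m j) - int j + 1"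

definition arrow :: "nat list list \<Rightarrow> nat list" where
  "arrow ls = rev (sort (concat ls))"

definition is_comp :: "nat \<Rightarrow> nat \<Rightarrow> (nat \<Rightarrow> nat) \<Rightarrow> bool" where
  "is_comp p n b \<longleftrightarrow> (\<Sum>i=1..p. b i) = n"

definition alpha_comp :: "nat \<Rightarrow> (nat \<Rightarrow> nat) \<Rightarrow> nat" where
  "alpha_comp p b = (\<Sum>i=1..p. i * b i)"

definition ell_w :: "nat \<Rightarrow> (nat \<Rightarrow> nat) \<Rightarrow> nat" where
  "ell_w p b = (\<Sum>i=1..p. \<Sum>j=i+1..p. b i * b j)"

definition is_multipart :: "nat \<Rightarrow> (nat \<Rightarrow> nat list) \<Rightarrow> bool" where
  "is_multipart r lam \<longleftrightarrow> (\<forall>s\<in>{1..r}. is_partition (lam s))"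

text \<open>lambda^[t] (t >= 1), indices taken periodically modulo p\<close>
definition blk :: "nat \<Rightarrow> nat \<Rightarrow> (nat \<Rightarrow> nat list) \<Rightarrow> nat \<Rightarrow> nat list list" where
  "blk p d lam t = map (\<lambda>c. lam (d * ((t - 1) mod p) + c)) [1..<d+1]"

definition Pdb :: "nat \<Rightarrow> nat \<Rightarrow> (nat \<Rightarrow> nat) \<Rightarrow> (nat \<Rightarrow> nat list) set" where
  "Pdb p d b = {lam. is_multipart (p * d) lam \<and>
      (\<forall>t\<in>{1..p}. sum_list (map sum_list (blk p d lam t)) = b t)}"

definition olam :: "nat \<Rightarrow> nat \<Rightarrow> (nat \<Rightarrow> nat list) \<Rightarrow> nat" where
  "olam p d lam = (LEAST k. 1 \<le> k \<and> (\<forall>t\<ge>1. blk p d lam (k + t) = blk p d lam t))"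

definition plam :: "nat \<Rightarrow> nat \<Rightarrow> (nat \<Rightarrow> nat list) \<Rightarrow> nat" where
  "plam p d lam = p div olam p d lam"

definition nlam :: "nat \<Rightarrow> nat \<Rightarrow> nat \<Rightarrow> (nat \<Rightarrow> nat list) \<Rightarrow> nat" where
  "nlam p d n lam = n div plam p d lam"

text \<open>s = d(p_s - 1) + d_s\<close>
definition pidx :: "nat \<Rightarrow> nat \<Rightarrow> nat" where "pidx d s = (s - 1) div d + 1"
definition didx :: "nat \<Rightarrow> nat \<Rightarrow> nat" where "didx d s = (s - 1) mod d + 1"

definition cells :: "(nat \<Rightarrow> nat list) \<Rightarrow> nat set \<Rightarrow> (nat \<times> nat \<times> nat) set" where
  "cells lam S = {(i, j, s). s \<in> S \<and> 1 \<le> i \<and> 1 \<le> j \<and> j \<le> part (lam s) i}"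

definition hlam :: "complex \<Rightarrow> complex \<Rightarrow> (nat \<Rightarrow> complex) \<Rightarrow> nat \<Rightarrow> (nat \<Rightarrow> nat list)
    \<Rightarrow> nat \<Rightarrow> nat \<Rightarrow> nat \<Rightarrow> nat \<Rightarrow> complex" where
  "hlam eps q Q d lam i j s t =
     eps powi (int (pidx d s) - int (pidx d t)) * q powi (hook (lam s) (lam t) i j)
     * Q (didx d s) / Q (didx d t)"

definition qexp :: "nat \<Rightarrow> nat \<Rightarrow> (nat \<Rightarrow> nat) \<Rightarrow> (nat \<Rightarrow> nat list) \<Rightarrow> int" where
  "qexp p d b lam = int (ell_w p b) - int (beta (arrow (map lam [1..<p*d+1])))
      + (\<Sum>a=1..p. int (beta (arrow (blk p d lam a))))"

definition f_lam :: "nat \<Rightarrow> nat \<Rightarrow> nat \<Rightarrow> (nat \<Rightarrow> nat) \<Rightarrow> (nat \<Rightarrow> nat list)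
    \<Rightarrow> complex \<Rightarrow> complex \<Rightarrow> (nat \<Rightarrow> complex) \<Rightarrow> complex" where
  "f_lam p d n b lam eps q Q =
     eps powi ((int (p*d) * int n * (int p - 1)) div 2 - int d * int (alpha_comp p b))
     * q powi (qexp p d b lam)
     * (\<Prod>i=1..d. Q i) ^ (n * (p - 1))
     * (\<Prod>(i,j,s)\<in>cells lam {1..p*d}.
          \<Prod>t\<in>{t\<in>{1..p*d}. pidx d t \<noteq> pidx d s}. (hlam eps q Q d lam i j s t - 1))"

definition gamma_lam :: "nat \<Rightarrow> nat \<Rightarrow> (nat \<Rightarrow> nat) \<Rightarrow> (nat \<Rightarrow> nat list) \<Rightarrow> rat" where
  "gamma_lam p d b lam = of_int (qexp p d b lam) / of_nat (plam p d lam)"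

definition alpha_lam :: "nat \<Rightarrow> nat \<Rightarrow> nat \<Rightarrow> (nat \<Rightarrow> nat) \<Rightarrow> (nat \<Rightarrow> nat list) \<Rightarrow> rat" where
  "alpha_lam p d n b lam =
     of_nat (nlam p d n lam) * (of_nat (p*d*p) - of_nat (d * olam p d lam)) / 2
     - of_nat (d * alpha_comp p b) / of_nat (plam p d lam)"

text \<open>g_lambda (the rational exponents are integers by the theorem; floor is then exact)\<close>
definition g_lam :: "nat \<Rightarrow> nat \<Rightarrow> nat \<Rightarrow> (nat \<Rightarrow> nat) \<Rightarrow> (nat \<Rightarrow> nat list)
    \<Rightarrow> complex \<Rightarrow> complex \<Rightarrow> (nat \<Rightarrow> complex) \<Rightarrow> complex" where
  "g_lam p d n b lam eps q Q =
     (let ol = olam p d lam; pl = plam p d lam; nl = nlam p d n lam in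
     eps powi \<lfloor>alpha_lam p d n b lam\<rfloor> * q powi \<lfloor>gamma_lam p d b lam\<rfloor>
     * (\<Prod>i=1..d. Q i) ^ (nl * (p - 1))
     * (\<Prod>(i,j,s)\<in>cells lam {1..d*ol}. \<Prod>t\<in>{1..d*ol}.
          \<Prod>a\<in>{a. a < pl \<and> (pidx d t = pidx d s \<longrightarrow> a \<noteq> 0)}.
            (eps ^ (a * ol) * hlam eps q Q d lam i j s t - 1)))"

text \<open>membership in Z[eps, q^{+-1}, Q_1^{+-1}, ..., Q_d^{+-1}] for a function of (q,Q)
  (eps fixed): a fixed integer combination of monomials agreeing with it for all
  nonzero q, Q\<close>
definition in_Zring :: "nat \<Rightarrow> complex \<Rightarrow> (complex \<Rightarrow> (nat \<Rightarrow> complex) \<Rightarrow> complex) \<Rightarrow> bool" where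
  "in_Zring d eps G \<longleftrightarrow> (\<exists>S :: (nat \<times> int \<times> int list) set. \<exists>c :: nat \<times> int \<times> int list \<Rightarrow> int.
      finite S \<and> (\<forall>(e,k,v)\<in>S. length v = d) \<and>
      (\<forall>q Q. q \<noteq> 0 \<and> (\<forall>i\<in>{1..d}. Q i \<noteq> 0) \<longrightarrow>
         G q Q = (\<Sum>(e,k,v)\<in>S. of_int (c (e,k,v)) * eps ^ e * q powi k
                     * (\<Prod>i<d. Q (i+1) powi (v ! i)))))"

end

theory Submission
  imports Defs "HOL-Library.Multiset"
begin

text \<open>
  Write \<open>ok = olam p d lam\<close> and \<open>pl = plam p d lam\<close>.  The minimal period \<open>ok\<close> of
  the block sequence \<open>blk p d lam\<close> divides \<open>p\<close>, so \<open>p = ok * pl\<close> and \<open>lam\<close> consists of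
  \<open>pl\<close> consecutive copies of its first \<open>d * ok\<close> components, the root \<open>sqrt lam\<close>.

  (1) Laurent polynomials: \<open>in_Zring\<close> contains the monomials and is closed under
      products and differences, hence contains \<open>g_lam\<close> (which is built from them).
  (2) Folding the product: the cells of \<open>lam\<close> are the cells of the root translated by
      \<open>d * ok * c\<close> with \<open>c < pl\<close>; translating both indices of \<open>hlam\<close> multiplies it by a
      power of \<open>eps^ok\<close>.  So the cell product of \<open>f_lam\<close> is the \<open>pl\<close>-th power of that of
      \<open>g_lam\<close>.
  (3) The statistic \<open>beta\<close>: repeating every part \<open>pl\<close> times scales \<open>2 beta + size\<close> by
      \<open>pl^2\<close>, which expresses \<open>beta\<close> of all parts of \<open>lam\<close> through that of the root.
  (4) Exponents, in the locale \<open>comp_multipartition\<close>: the composition \<open>b\<close> is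
      \<open>ok\<close>-periodic, so every sum over \<open>{1..p}\<close> reduces to one period.  This shows that
      \<open>gamma_lam\<close> and \<open>alpha_lam\<close> are integers and that the \<open>eps\<close>-, \<open>q\<close>- and
      \<open>Q\<close>-exponents of \<open>f_lam\<close> are \<open>pl\<close> times those of \<open>g_lam\<close>, up to the stated correction.
\<close>

section \<open>Laurent polynomials over \<open>\<int>[\<epsilon>]\<close>\<close>

definition monomial :: "complex \<Rightarrow> complex \<Rightarrow> (nat \<Rightarrow> complex) \<Rightarrow> nat \<Rightarrow> nat \<times> int \<times> int list \<Rightarrow> complex" where
  "monomial eps q Q d x = eps ^ fst x * q powi fst (snd x) * (\<Prod>i<d. Q (i+1) powi (snd (snd x) ! i))"

definition nonzero_point :: "nat \<Rightarrow> complex \<Rightarrow> (nat \<Rightarrow> complex) \<Rightarrow> bool" where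
  "nonzero_point d q Q \<longleftrightarrow> q \<noteq> 0 \<and> (\<forall>i\<in>{1..d}. Q i \<noteq> 0)"

lemma in_Zring_iff:
  "in_Zring d eps G \<longleftrightarrow> (\<exists>S c. finite S \<and> (\<forall>x\<in>S. length (snd (snd x)) = d) \<and>
     (\<forall>q Q. nonzero_point d q Q \<longrightarrow> G q Q = (\<Sum>x\<in>S. of_int (c x) * monomial eps q Q d x)))"
  unfolding in_Zring_def nonzero_point_def monomial_def
  by (simp add: split_def mult.assoc)

lemma in_Zring_cong:
  "in_Zring d eps F \<Longrightarrow> (\<And>q Q. nonzero_point d q Q \<Longrightarrow> G q Q = F q Q) \<Longrightarrow> in_Zring d eps G"
  unfolding in_Zring_iff by metis

lemma in_Zring_monomial: "length v = d \<Longrightarrow> in_Zring d eps (\<lambda>q Q. monomial eps q Q d (e,k,v))"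
  unfolding in_Zring_iff
  by (rule exI[of _ "{(e,k,v)}"], rule exI[of _ "\<lambda>_. 1"]) simp

lemma in_Zring_eps_q: "in_Zring d eps (\<lambda>q Q. eps ^ e * q powi k)"
  by (rule in_Zring_cong[OF in_Zring_monomial[of "replicate d 0" d eps e k]])
     (auto simp: monomial_def)

lemma in_Zring_one: "in_Zring d eps (\<lambda>q Q. 1)"
  by (rule in_Zring_cong[OF in_Zring_eps_q[of d eps 0 0]]) simp

lemma in_Zring_q: "in_Zring d eps (\<lambda>q Q. q powi k)"
  by (rule in_Zring_cong[OF in_Zring_eps_q[of d eps 0 k]]) simp

lemma in_Zring_Q:
  assumes "i \<in> {1..d}"
  shows "in_Zring d eps (\<lambda>q Q. Q i powi z)"
proof (rule in_Zring_cong[OF in_Zring_monomial[of "(replicate d 0)[i-1 := z]" d eps 0 0]])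
  show "length ((replicate d 0)[i-1 := z]) = d" by simp
  fix q :: complex and Q :: "nat \<Rightarrow> complex"
  have "(\<Prod>l<d. Q (l+1) powi (((replicate d 0)[i-1 := z]) ! l))
      = (\<Prod>l<d. if l = i - 1 then Q (l+1) powi z else 1)"
    by (rule prod.cong) (auto simp: nth_list_update)
  also have "\<dots> = Q i powi z" using assms by (simp, arith)
  finally show "Q i powi z = monomial eps q Q d (0, 0, (replicate d 0)[i - 1 := z])"
    by (simp add: monomial_def)
qed

definition add_exps :: "nat \<times> int \<times> int list \<Rightarrow> nat \<times> int \<times> int list \<Rightarrow> nat \<times> int \<times> int list" where
  "add_exps x y = (fst x + fst y, fst (snd x) + fst (snd y),
     map (\<lambda>(a,b). a+b) (zip (snd (snd x)) (snd (snd y))))"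

lemma monomial_add_exps:
  assumes "nonzero_point d q Q" "length (snd (snd x)) = d" "length (snd (snd y)) = d"
  shows "monomial eps q Q d (add_exps x y) = monomial eps q Q d x * monomial eps q Q d y"
proof -
  have q: "q \<noteq> 0" and Q: "\<And>l. l < d \<Longrightarrow> Q (l+1) \<noteq> 0"
    using assms(1) by (auto simp: nonzero_point_def)
  have "(\<Prod>l<d. Q (l+1) powi (snd (snd (add_exps x y)) ! l)) =
      (\<Prod>l<d. Q (l+1) powi (snd (snd x) ! l) * Q (l+1) powi (snd (snd y) ! l))"
    by (rule prod.cong) (use assms Q in \<open>auto simp: add_exps_def power_int_add\<close>)
  then show ?thesis using q
    by (simp add: monomial_def add_exps_def power_add power_int_add prod.distrib algebra_simps)
qed

lemma in_Zring_mult: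
  assumes "in_Zring d eps F" "in_Zring d eps G"
  shows "in_Zring d eps (\<lambda>q Q. F q Q * G q Q)"
proof -
  obtain S1 c1 where S1: "finite S1" "\<forall>x\<in>S1. length (snd (snd x)) = d"
    "\<And>q Q. nonzero_point d q Q \<Longrightarrow> F q Q = (\<Sum>x\<in>S1. of_int (c1 x) * monomial eps q Q d x)"
    using assms(1) unfolding in_Zring_iff by blast
  obtain S2 c2 where S2: "finite S2" "\<forall>x\<in>S2. length (snd (snd x)) = d"
    "\<And>q Q. nonzero_point d q Q \<Longrightarrow> G q Q = (\<Sum>x\<in>S2. of_int (c2 x) * monomial eps q Q d x)"
    using assms(2) unfolding in_Zring_iff by blast
  define h where "h = (\<lambda>z. add_exps (fst z) (snd z))"
  define c where "c = (\<lambda>w. \<Sum>z\<in>{z. z \<in> S1 \<times> S2 \<and> h z = w}. c1 (fst z) * c2 (snd z))"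
  have fin: "finite (S1 \<times> S2)" using S1 S2 by auto
  show ?thesis unfolding in_Zring_iff
  proof (intro exI conjI allI impI)
    show "finite (h ` (S1 \<times> S2))" using fin by simp
    show "\<forall>x\<in>h ` (S1 \<times> S2). length (snd (snd x)) = d"
      using S1 S2 by (auto simp: h_def add_exps_def)
    fix q Q assume nz: "nonzero_point d q Q"
    have "F q Q * G q Q = (\<Sum>x\<in>S1. \<Sum>y\<in>S2.
        of_int (c1 x) * monomial eps q Q d x * (of_int (c2 y) * monomial eps q Q d y))"
      by (simp add: S1(3)[OF nz] S2(3)[OF nz] sum_product)
    also have "\<dots> = (\<Sum>z\<in>S1 \<times> S2. of_int (c1 (fst z) * c2 (snd z)) * monomial eps q Q d (h z))"
      unfolding sum.cartesian_product
    proof (rule sum.cong[OF refl])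
      fix z assume "z \<in> S1 \<times> S2"
      then obtain x y where xy: "z = (x,y)" "x \<in> S1" "y \<in> S2" by auto
      then have "length (snd (snd x)) = d" "length (snd (snd y)) = d" using S1(2) S2(2) by auto
      then show "(case z of (x,y) \<Rightarrow> of_int (c1 x) * monomial eps q Q d x
            * (of_int (c2 y) * monomial eps q Q d y))
          = of_int (c1 (fst z) * c2 (snd z)) * monomial eps q Q d (h z)"
        unfolding xy h_def using monomial_add_exps[OF nz] by simp
    qed
    also have "\<dots> = (\<Sum>w\<in>h ` (S1 \<times> S2). \<Sum>z\<in>{z. z \<in> S1 \<times> S2 \<and> h z = w}.
        of_int (c1 (fst z) * c2 (snd z)) * monomial eps q Q d (h z))"
      by (rule sum.image_gen[OF fin])
    also have "\<dots> = (\<Sum>w\<in>h ` (S1 \<times> S2). of_int (c w) * monomial eps q Q d w)"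
      unfolding c_def of_int_sum sum_distrib_right
      by (rule sum.cong[OF refl], rule sum.cong[OF refl]) auto
    finally show "F q Q * G q Q = (\<Sum>w\<in>h ` (S1 \<times> S2). of_int (c w) * monomial eps q Q d w)" .
  qed
qed

lemma in_Zring_diff:
  assumes "in_Zring d eps F" "in_Zring d eps G"
  shows "in_Zring d eps (\<lambda>q Q. F q Q - G q Q)"
proof -
  obtain S1 c1 where S1: "finite S1" "\<forall>x\<in>S1. length (snd (snd x)) = d"
    "\<And>q Q. nonzero_point d q Q \<Longrightarrow> F q Q = (\<Sum>x\<in>S1. of_int (c1 x) * monomial eps q Q d x)"
    using assms(1) unfolding in_Zring_iff by blast
  obtain S2 c2 where S2: "finite S2" "\<forall>x\<in>S2. length (snd (snd x)) = d"
    "\<And>q Q. nonzero_point d q Q \<Longrightarrow> G q Q = (\<Sum>x\<in>S2. of_int (c2 x) * monomial eps q Q d x)"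
    using assms(2) unfolding in_Zring_iff by blast
  define c1' where "c1' = (\<lambda>x. if x \<in> S1 then c1 x else 0)"
  define c2' where "c2' = (\<lambda>x. if x \<in> S2 then c2 x else 0)"
  have fin: "finite (S1 \<union> S2)" using S1 S2 by auto
  have extend: "(\<Sum>x\<in>S1 \<union> S2. of_int (if x \<in> S then c x else 0) * monomial eps q Q d x)
      = (\<Sum>x\<in>S. of_int (c x) * monomial eps q Q d x)" if "S \<subseteq> S1 \<union> S2" for S c q Q
    using sum.mono_neutral_right[OF fin that, of "\<lambda>x. of_int (if x \<in> S then c x else 0) * monomial eps q Q d x"]
    by simp
  show ?thesis unfolding in_Zring_iff
  proof (intro exI[of _ "S1 \<union> S2"] exI[of _ "\<lambda>x. c1' x - c2' x"] conjI allI impI)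
    show "finite (S1 \<union> S2)" by (rule fin)
    show "\<forall>x\<in>S1 \<union> S2. length (snd (snd x)) = d" using S1 S2 by auto
    fix q Q assume nz: "nonzero_point d q Q"
    have "(\<Sum>x\<in>S1 \<union> S2. of_int (c1' x - c2' x) * monomial eps q Q d x)
        = (\<Sum>x\<in>S1 \<union> S2. of_int (c1' x) * monomial eps q Q d x)
          - (\<Sum>x\<in>S1 \<union> S2. of_int (c2' x) * monomial eps q Q d x)"
      by (simp add: sum_subtractf algebra_simps)
    also have "\<dots> = F q Q - G q Q"
      unfolding c1'_def c2'_def extend[OF Un_upper1] extend[OF Un_upper2] S1(3)[OF nz] S2(3)[OF nz] ..
    finally show "F q Q - G q Q = (\<Sum>x\<in>S1 \<union> S2. of_int (c1' x - c2' x) * monomial eps q Q d x)" ..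
  qed
qed

lemma in_Zring_prod:
  assumes "\<And>x. x \<in> A \<Longrightarrow> in_Zring d eps (F x)"
  shows "in_Zring d eps (\<lambda>q Q. \<Prod>x\<in>A. F x q Q)"
proof (cases "finite A")
  case True
  then show ?thesis using assms
  proof (induction A rule: finite_induct)
    case empty then show ?case by (simp add: in_Zring_one)
  next
    case (insert x A)
    have "in_Zring d eps (\<lambda>q Q. F x q Q * (\<Prod>x\<in>A. F x q Q))"
      by (rule in_Zring_mult) (use insert in auto)
    then show ?case using insert by simp
  qed
next
  case False then show ?thesis by (simp add: in_Zring_one)
qed

lemma in_Zring_power: "in_Zring d eps F \<Longrightarrow> in_Zring d eps (\<lambda>q Q. F q Q ^ N)"
  by (induction N) (simp_all add: in_Zring_one in_Zring_mult)

text \<open>For a root of unity \<open>\<epsilon>\<close> every integer power is a natural power, hence a coefficient.\<close>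
lemma root_of_unity_powi:
  assumes "eps ^ p = (1::complex)" "p > 0"
  shows "eps powi k = eps ^ nat (k mod int p)"
proof -
  have nz: "eps \<noteq> 0" using assms by (metis power_0_left less_not_refl2 zero_neq_one)
  have "eps powi k = eps powi (k mod int p + int p * (k div int p))" by simp
  also have "\<dots> = eps powi (k mod int p) * (eps powi int p) powi (k div int p)"
    by (simp only: power_int_add[OF disjI1[OF nz]] power_int_mult)
  also have "\<dots> = eps ^ nat (k mod int p)" using assms nz by (simp add: power_int_nonneg_exp)
  finally show ?thesis .
qed

lemma in_Zring_eps_powi:
  assumes "eps ^ p = (1::complex)" "p > 0"
  shows "in_Zring d eps (\<lambda>q Q. eps powi k)"
  by (rule in_Zring_cong[OF in_Zring_eps_q[of d eps "nat (k mod int p)" 0]])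
     (simp add: root_of_unity_powi[OF assms])

lemma in_Zring_hlam_factor:
  assumes "eps ^ p = (1::complex)" "p > 0" "d \<ge> 1"
  shows "in_Zring d eps (\<lambda>q Q. eps ^ e * hlam eps q Q d lam i j s t - 1)"
proof -
  have ds: "didx d s \<in> {1..d}" "didx d t \<in> {1..d}"
    using assms(3) by (auto simp: didx_def Suc_le_eq)
  have "in_Zring d eps (\<lambda>q Q. (eps ^ (e + nat ((int (pidx d s) - int (pidx d t)) mod int p))
       * q powi hook (lam s) (lam t) i j) * Q (didx d s) powi 1 * Q (didx d t) powi (-1) - 1)"
    by (intro in_Zring_diff in_Zring_mult in_Zring_eps_q in_Zring_Q in_Zring_one ds)
  then show ?thesis
    by (rule in_Zring_cong) (simp add: hlam_def root_of_unity_powi[OF assms(1,2)]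
        power_add divide_inverse power_int_minus algebra_simps)
qed

lemma in_Zring_g_lam:
  assumes "eps ^ p = (1::complex)" "p > 0" "d \<ge> 1"
  shows "in_Zring d eps (g_lam p d n b lam eps)"
proof -
  have Q: "i \<in> {1..d} \<Longrightarrow> in_Zring d eps (\<lambda>q Q. Q i)" for i
    by (rule in_Zring_cong[OF in_Zring_Q[of i d eps 1]]) simp_all
  have "in_Zring d eps (\<lambda>q Q. eps powi \<lfloor>alpha_lam p d n b lam\<rfloor> * q powi \<lfloor>gamma_lam p d b lam\<rfloor>
     * (\<Prod>i=1..d. Q i) ^ (nlam p d n lam * (p - 1))
     * (\<Prod>x\<in>cells lam {1..d*olam p d lam}. case x of (i,j,s) \<Rightarrow> \<Prod>t\<in>{1..d*olam p d lam}.
          \<Prod>a\<in>{a. a < plam p d lam \<and> (pidx d t = pidx d s \<longrightarrow> a \<noteq> 0)}.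
            (eps ^ (a * olam p d lam) * hlam eps q Q d lam i j s t - 1)))"
    by (intro in_Zring_mult in_Zring_eps_powi[OF assms(1,2)] in_Zring_q in_Zring_power
        in_Zring_prod Q) (auto split: prod.splits intro!: in_Zring_prod in_Zring_hlam_factor[OF assms])
  then show ?thesis unfolding g_lam_def Let_def by (simp add: split_def)
qed

section \<open>Index arithmetic\<close>

lemma prod_regroup:
  "(\<Prod>s\<in>{1..k*m}. (f::nat \<Rightarrow> 'a::comm_monoid_mult) s) = (\<Prod>c<m. \<Prod>s\<in>{1..k}. f (s + k*c))"
proof (induction m)
  case 0 then show ?case by simp
next
  case (Suc m)
  have "{1..k*Suc m} = {1..k*m} \<union> {1+k*m..k+k*m}" by auto
  then have "(\<Prod>s\<in>{1..k*Suc m}. f s) = (\<Prod>s\<in>{1..k*m}. f s) * (\<Prod>s\<in>{1+k*m..k+k*m}. f s)"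
    by (simp add: prod.union_disjoint ivl_disj_int)
  also have "(\<Prod>s\<in>{1+k*m..k+k*m}. f s) = (\<Prod>s\<in>{1..k}. f (s + k*m))"
    by (rule prod.shift_bounds_cl_nat_ivl)
  finally show ?case using Suc by simp
qed

lemma sum_regroup:
  "(\<Sum>s\<in>{1..k*m}. (f::nat \<Rightarrow> 'a::comm_monoid_add) s) = (\<Sum>c<m. \<Sum>s\<in>{1..k}. f (s + k*c))"
proof (induction m)
  case 0 then show ?case by simp
next
  case (Suc m)
  have "{1..k*Suc m} = {1..k*m} \<union> {1+k*m..k+k*m}" by auto
  then have "(\<Sum>s\<in>{1..k*Suc m}. f s) = (\<Sum>s\<in>{1..k*m}. f s) + (\<Sum>s\<in>{1+k*m..k+k*m}. f s)"
    by (simp add: sum.union_disjoint ivl_disj_int)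
  also have "(\<Sum>s\<in>{1+k*m..k+k*m}. f s) = (\<Sum>s\<in>{1..k}. f (s + k*m))"
    by (rule sum.shift_bounds_cl_nat_ivl)
  finally show ?case using Suc by simp
qed

lemma sum_periodic:
  assumes "\<And>t c. t \<in> {1..ok} \<Longrightarrow> c < pl \<Longrightarrow> f (t + ok*c) = (f t :: nat)"
  shows "(\<Sum>i\<in>{1..ok*pl}. f i) = pl * (\<Sum>t\<in>{1..ok}. f t)"
proof -
  have "(\<Sum>i\<in>{1..ok*pl}. f i) = (\<Sum>c<pl. \<Sum>t\<in>{1..ok}. f (t + ok*c))" by (rule sum_regroup)
  also have "\<dots> = (\<Sum>c<pl. \<Sum>t\<in>{1..ok}. f t)" using assms by simp
  finally show ?thesis by simp
qed

lemma double_sum_lessThan: "2 * (\<Sum>c<(m::nat). c) = m * (m - 1)"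
  by (induction m) (auto simp: algebra_simps)

lemma sum_periodic_weighted:
  assumes "\<And>t c. t \<in> {1..ok} \<Longrightarrow> c < pl \<Longrightarrow> f (t + ok*c) = (f t :: nat)"
  shows "2 * (\<Sum>i\<in>{1..ok*pl}. i * f i)
    = 2 * pl * (\<Sum>t\<in>{1..ok}. t * f t) + ok * (pl * (pl - 1)) * (\<Sum>t\<in>{1..ok}. f t)"
proof -
  define A where "A = (\<Sum>t\<in>{1..ok}. t * f t)"
  define M where "M = (\<Sum>t\<in>{1..ok}. f t)"
  have "(\<Sum>i\<in>{1..ok*pl}. i * f i) = (\<Sum>c<pl. \<Sum>t\<in>{1..ok}. (t + ok*c) * f (t + ok*c))"
    by (rule sum_regroup)
  also have "\<dots> = (\<Sum>c<pl. A + ok * c * M)"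
  proof (rule sum.cong[OF refl])
    fix c assume "c \<in> {..<pl}"
    then have "(\<Sum>t\<in>{1..ok}. (t + ok*c) * f (t + ok*c)) = (\<Sum>t\<in>{1..ok}. t * f t + ok*c*f t)"
      using assms by (intro sum.cong) (auto simp: algebra_simps)
    then show "(\<Sum>t\<in>{1..ok}. (t + ok*c) * f (t + ok*c)) = A + ok*c*M"
      by (simp add: A_def M_def sum.distrib sum_distrib_left)
  qed
  also have "\<dots> = pl * A + ok * M * (\<Sum>c<pl. c)"
    by (simp add: sum.distrib sum_distrib_left sum_distrib_right algebra_simps)
  finally have "2 * (\<Sum>i\<in>{1..ok*pl}. i * f i) = 2 * pl * A + ok * (2 * (\<Sum>c<pl. c)) * M"
    by (simp add: algebra_simps)
  then show ?thesis unfolding A_def[symmetric] M_def[symmetric] double_sum_lessThan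
    by (simp add: mult_ac)
qed

lemma pidx_shift: "d \<ge> 1 \<Longrightarrow> s \<ge> 1 \<Longrightarrow> pidx d (s + d*m) = pidx d s + m"
  by (cases s) (auto simp: pidx_def)

lemma didx_shift: "d \<ge> 1 \<Longrightarrow> s \<ge> 1 \<Longrightarrow> didx d (s + d*m) = didx d s"
  by (cases s) (auto simp: didx_def)

lemma pidx_range: "d \<ge> 1 \<Longrightarrow> t \<in> {1..d*ok} \<Longrightarrow> 1 \<le> pidx d t \<and> pidx d t \<le> ok"
  by (auto simp: pidx_def less_mult_imp_div_less Suc_le_eq mult.commute)

lemma add_mult_eq_iff:
  fixes x y ok :: nat
  assumes "x < ok" "y < ok"
  shows "x + ok*e = y + ok*c \<longleftrightarrow> x = y \<and> e = c"
proof
  assume h: "x + ok*e = y + ok*c"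
  have "(x + ok*e) mod ok = x" "(y + ok*c) mod ok = y" using assms by auto
  moreover have "(x + ok*e) div ok = e" "(y + ok*c) div ok = c" using assms by auto
  ultimately show "x = y \<and> e = c" using h by metis
qed auto

lemma dvd_add_diff_iff:
  fixes c e pl :: nat
  assumes "c < pl" "e < pl"
  shows "pl dvd (c + pl - e) \<longleftrightarrow> e = c"
proof (cases "e \<le> c")
  case True
  then have "c + pl - e = (c - e) + pl" by simp
  then have "pl dvd (c + pl - e) \<longleftrightarrow> pl dvd (c - e)" by simp
  also have "\<dots> \<longleftrightarrow> c - e = 0" using assms by (auto dest: dvd_imp_le)
  finally show ?thesis using True by auto
next
  case False
  then have "0 < c + pl - e" "c + pl - e < pl" using assms by auto
  then show ?thesis using False by (auto dest: dvd_imp_le)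
qed

lemma prod_periodic_shift:
  fixes G :: "nat \<Rightarrow> 'a::comm_monoid_mult"
  assumes "\<And>a. G (a + pl) = G a"
  shows "(\<Prod>x<pl. G (c + x)) = (\<Prod>x<pl. G x)"
proof (induction c)
  case 0 then show ?case by simp
next
  case (Suc c)
  show ?case
  proof (cases pl)
    case 0 then show ?thesis by simp
  next
    case (Suc k)
    have "(\<Prod>x<pl. G (Suc c + x)) = (\<Prod>x<k. G (c + Suc x)) * G (c + pl)"
      using Suc by (simp add: prod.lessThan_Suc)
    also have "G (c + pl) = G c" using assms by simp
    also have "(\<Prod>x<k. G (c + Suc x)) * G c = (\<Prod>x<pl. G (c + x))"
      using prod.lessThan_Suc_shift[of "\<lambda>x. G (c + x)" k] Suc by (simp add: mult.commute)
    finally show ?thesis using Suc.IH by simp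
  qed
qed

lemma prod_periodic_reflect:
  fixes G :: "nat \<Rightarrow> 'a::comm_monoid_mult"
  assumes "\<And>a. G (a + pl) = G a"
  shows "(\<Prod>e<pl. G (c + pl - e)) = (\<Prod>x<pl. G x)"
proof -
  have "(\<Prod>e<pl. G (c + pl - e)) = (\<Prod>e<pl. (\<lambda>x. G (Suc c + x)) (pl - Suc e))"
    by (rule prod.cong[OF refl], rule arg_cong[where f=G]) auto
  also have "\<dots> = (\<Prod>x<pl. G (Suc c + x))" by (rule prod.nat_diff_reindex)
  also have "\<dots> = (\<Prod>x<pl. G x)" using prod_periodic_shift[of G pl "Suc c"] assms by blast
  finally show ?thesis .
qed

section \<open>The period of the block sequence\<close>

lemma blk_period_p: "t \<ge> 1 \<Longrightarrow> blk p d lam (p + t) = blk p d lam t"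
  by (cases t) (simp_all add: blk_def)

lemma blk_shift_mult:
  assumes "\<forall>t\<ge>1. blk p d lam (k + t) = blk p d lam t" "t \<ge> 1"
  shows "blk p d lam (k*c + t) = blk p d lam t"
proof (induction c)
  case 0 then show ?case by simp
next
  case (Suc c)
  have "blk p d lam (k * Suc c + t) = blk p d lam (k + (k*c + t))" by (simp add: algebra_simps)
  also have "\<dots> = blk p d lam (k*c + t)" using assms by simp
  finally show ?case using Suc by simp
qed

text \<open>\<open>olam\<close> is a period of the blocks and divides \<open>p\<close> (else \<open>p mod olam\<close> would be a smaller period).\<close>
lemma olam_props:
  assumes "p > 0"
  shows "1 \<le> olam p d lam" "olam p d lam dvd p"
    "\<forall>t\<ge>1. blk p d lam (olam p d lam + t) = blk p d lam t"
proof -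
  define P where "P = (\<lambda>k. 1 \<le> k \<and> (\<forall>t\<ge>1. blk p d lam (k + t) = blk p d lam t))"
  have "P p" using assms blk_period_p by (simp add: P_def)
  then have o: "P (olam p d lam)" unfolding olam_def P_def[symmetric] by (rule LeastI)
  then show "1 \<le> olam p d lam" "\<forall>t\<ge>1. blk p d lam (olam p d lam + t) = blk p d lam t"
    by (auto simp: P_def)
  have min: "\<And>k. P k \<Longrightarrow> olam p d lam \<le> k" unfolding olam_def P_def[symmetric] by (rule Least_le)
  let ?o = "olam p d lam"
  show "?o dvd p"
  proof (rule ccontr)
    assume nd: "\<not> ?o dvd p"
    let ?r = "p mod ?o"
    have "blk p d lam (?r + t) = blk p d lam t" if "t \<ge> 1" for t
    proof -
      have "blk p d lam (?r + t) = blk p d lam (?o * (p div ?o) + (?r + t))"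
        using blk_shift_mult[of p d lam ?o "?r + t" "p div ?o"] o that by (simp add: P_def)
      also have "?o * (p div ?o) + (?r + t) = p + t" by simp
      finally show ?thesis using blk_period_p that by simp
    qed
    then have "P ?r" using nd by (simp add: P_def dvd_eq_mod_eq_0)
    then have "?o \<le> ?r" by (rule min)
    moreover have "?r < ?o" using o by (simp add: P_def)
    ultimately show False by simp
  qed
qed

lemma lam_period:
  assumes "d \<ge> 1" "\<forall>t\<ge>1. blk p d lam (k + t) = blk p d lam t" "1 \<le> s" "s + d*k \<le> p*d"
  shows "lam (s + d*k) = lam s"
proof -
  define t where "t = (s - 1) div d + 1"
  define i where "i = (s - 1) mod d"
  have nth: "blk p d lam u ! i = lam (d * ((u - 1) mod p) + (i + 1))" for u
    using assms(1) by (simp add: i_def blk_def nth_map del: upt_Suc)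
  have s_eq: "s = d*(t-1) + (i + 1)" using assms(3) by (simp add: t_def i_def)
  have lt: "(s - 1 + d*k) div d < p" using assms by (simp add: less_mult_imp_div_less mult.commute)
  have e1: "(s - 1 + d*k) div d = t - 1 + k" using assms(1) by (simp add: t_def)
  have m1: "(t - 1) mod p = t - 1" and m2: "(k + t - 1) mod p = k + t - 1"
    using lt e1 by (simp_all add: t_def)
  have "lam s = blk p d lam t ! i" using nth[of t] m1 s_eq by simp
  also have "\<dots> = blk p d lam (k + t) ! i" using assms(2) t_def by (metis le_add2)
  also have "\<dots> = lam (d * (k + t - 1) + (i + 1))" using nth[of "k + t"] m2 by simp
  also have "d * (k + t - 1) + (i + 1) = s + d*k" using s_eq by (simp add: t_def algebra_simps)
  finally show ?thesis by simp
qed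

definition repeats_root :: "nat \<Rightarrow> nat \<Rightarrow> nat \<Rightarrow> (nat \<Rightarrow> nat list) \<Rightarrow> bool" where
  "repeats_root d ok pl lam \<longleftrightarrow> (\<forall>s c. 1 \<le> s \<longrightarrow> s \<le> d*ok \<longrightarrow> c < pl \<longrightarrow> lam (s + d*ok*c) = lam s)"

lemma repeats_rootD:
  "repeats_root d ok pl lam \<Longrightarrow> s \<in> {1..d*ok} \<Longrightarrow> c < pl \<Longrightarrow> lam (s + d*ok*c) = lam s"
  by (simp add: repeats_root_def)

lemma repeats_root_olam:
  assumes "p > 0" "d \<ge> 1"
  shows "repeats_root d (olam p d lam) (plam p d lam) lam"
  unfolding repeats_root_def
proof (intro allI impI)
  let ?o = "olam p d lam" and ?pl = "plam p d lam"
  fix s c assume s: "1 \<le> s" "s \<le> d*?o" and c: "c < ?pl"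
  have per: "\<forall>t\<ge>1. blk p d lam (?o + t) = blk p d lam t" and p: "p = ?o * ?pl"
    using olam_props[OF assms(1)] by (auto simp: plam_def)
  have "lam (s + d*?o*c') = lam s" if "c' \<le> c" for c'
    using that
  proof (induction c')
    case (Suc c')
    have "d*?o*Suc c' \<le> d*?o*c" using Suc.prems by (intro mult_le_mono2)
    then have "s + d*?o*Suc c' \<le> d*?o*(c+1)" using s by simp
    also have "\<dots> \<le> d*?o*?pl" using c by (intro mult_le_mono2) simp
    also have "\<dots> = p*d" using p by simp
    finally have "lam ((s + d*?o*c') + d*?o) = lam (s + d*?o*c')"
      by (intro lam_period[OF assms(2) per]) (use s in \<open>simp_all add: algebra_simps\<close>)
    then show ?case using Suc by (simp add: algebra_simps)
  qed simp
  then show "lam (s + d*?o*c) = lam s" by simp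
qed

section \<open>Folding the product of \<open>f_lam\<close> into a \<open>pl\<close>-th power\<close>

text \<open>Translating \<open>s\<close> by \<open>c\<close> and \<open>t\<close> by \<open>e\<close> copies of the root multiplies \<open>hlam\<close> by
  \<open>eps^(ok (c - e))\<close>, written with a nonnegative exponent using \<open>eps^(ok pl) = 1\<close>.\<close>
lemma hlam_shift:
  assumes "d \<ge> 1" "eps \<noteq> 0" "eps ^ (ok*pl) = 1" "s \<ge> 1" "t \<ge> 1" "e < pl"
    "lam (s + d*ok*c) = lam s" "lam (t + d*ok*e) = lam t"
  shows "hlam eps q Q d lam i j (s + d*ok*c) (t + d*ok*e)
    = eps ^ ((c+pl-e)*ok) * hlam eps q Q d lam i j s t"
proof -
  have ps: "pidx d (s + d*ok*c) = pidx d s + ok*c" and pt: "pidx d (t + d*ok*e) = pidx d t + ok*e"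
    using pidx_shift[OF assms(1,4), of "ok*c"] pidx_shift[OF assms(1,5), of "ok*e"]
    by (simp_all add: mult.assoc)
  have ds: "didx d (s + d*ok*c) = didx d s" and dt: "didx d (t + d*ok*e) = didx d t"
    using didx_shift[OF assms(1,4), of "ok*c"] didx_shift[OF assms(1,5), of "ok*e"]
    by (simp_all add: mult.assoc)
  have "int (c+pl-e) = int c + int pl - int e" using assms(6) by simp
  then have X: "int ((c+pl-e)*ok) = int ok*(int c - int e) + int (ok*pl)"
    unfolding of_nat_mult by (simp add: algebra_simps)
  have E: "eps ^ ((c+pl-e)*ok) = eps powi (int ok*(int c - int e))"
  proof -
    have "eps ^ ((c+pl-e)*ok) = eps powi (int ok*(int c - int e)) * eps powi (int (ok*pl))"
      unfolding power_int_of_nat[symmetric] X by (simp only: power_int_add[OF disjI1[OF assms(2)]])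
    then show ?thesis using assms(3) by (simp only: power_int_of_nat mult_1_right)
  qed
  have "eps powi (int (pidx d s + ok*c) - int (pidx d t + ok*e))
      = eps powi ((int (pidx d s) - int (pidx d t)) + int ok*(int c - int e))"
    by (simp add: algebra_simps)
  also have "\<dots> = eps powi (int (pidx d s) - int (pidx d t)) * eps ^ ((c+pl-e)*ok)"
    unfolding E by (simp only: power_int_add[OF disjI1[OF assms(2)]])
  finally show ?thesis unfolding hlam_def ps pt ds dt assms(7,8) by (simp add: algebra_simps)
qed

lemma translates_prod:
  assumes d: "d \<ge> 1" and nz: "eps \<noteq> 0" and ep: "eps ^ (ok*pl) = 1"
    and root: "repeats_root d ok pl lam"
    and s: "s \<in> {1..d*ok}" and t: "t \<in> {1..d*ok}" and c: "c < pl"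
  shows "(\<Prod>e<pl. if pidx d (t + d*ok*e) \<noteq> pidx d (s + d*ok*c)
                  then hlam eps q Q d lam i j (s + d*ok*c) (t + d*ok*e) - 1 else 1)
    = (\<Prod>a\<in>{a. a < pl \<and> (pidx d t = pidx d s \<longrightarrow> a \<noteq> 0)}. eps ^ (a*ok) * hlam eps q Q d lam i j s t - 1)"
proof -
  define G where "G = (\<lambda>a. if pidx d t = pidx d s \<longrightarrow> \<not> pl dvd a
    then eps ^ (a*ok) * hlam eps q Q d lam i j s t - 1 else 1)"
  have G_periodic: "G (a + pl) = G a" for a
  proof -
    have "eps ^ ((a + pl)*ok) = eps ^ (a*ok)" using ep by (simp add: algebra_simps power_add)
    then show ?thesis by (simp add: G_def)
  qed
  have rs: "1 \<le> pidx d s \<and> pidx d s \<le> ok" "1 \<le> pidx d t \<and> pidx d t \<le> ok"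
    using pidx_range[OF d] s t by auto
  have "(\<Prod>e<pl. if pidx d (t + d*ok*e) \<noteq> pidx d (s + d*ok*c)
                  then hlam eps q Q d lam i j (s + d*ok*c) (t + d*ok*e) - 1 else 1)
      = (\<Prod>e<pl. G (c + pl - e))"
  proof (rule prod.cong[OF refl])
    fix e assume e: "e \<in> {..<pl}"
    have pe: "pidx d (t + d*ok*e) = pidx d t + ok*e" "pidx d (s + d*ok*c) = pidx d s + ok*c"
      using pidx_shift[OF d, of t "ok*e"] pidx_shift[OF d, of s "ok*c"] s t by (auto simp: mult.assoc)
    have "pidx d t + ok*e = pidx d s + ok*c \<longleftrightarrow> (pidx d t - 1) + ok*e = (pidx d s - 1) + ok*c"
      using rs by auto
    also have "\<dots> \<longleftrightarrow> pidx d t - 1 = pidx d s - 1 \<and> e = c"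
      by (rule add_mult_eq_iff) (use rs in auto)
    also have "\<dots> \<longleftrightarrow> pidx d t = pidx d s \<and> pl dvd (c + pl - e)"
      using rs dvd_add_diff_iff[OF c, of e] e by auto
    finally have same_block: "pidx d (t + d*ok*e) = pidx d (s + d*ok*c)
        \<longleftrightarrow> pidx d t = pidx d s \<and> pl dvd (c + pl - e)" unfolding pe .
    have "hlam eps q Q d lam i j (s + d*ok*c) (t + d*ok*e) = eps ^ ((c+pl-e)*ok) * hlam eps q Q d lam i j s t"
      by (rule hlam_shift[OF d nz ep]) (use s t e c repeats_rootD[OF root] in auto)
    then show "(if pidx d (t + d*ok*e) \<noteq> pidx d (s + d*ok*c)
                  then hlam eps q Q d lam i j (s + d*ok*c) (t + d*ok*e) - 1 else 1) = G (c + pl - e)"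
      unfolding G_def using same_block by auto
  qed
  also have "\<dots> = (\<Prod>a<pl. G a)" by (rule prod_periodic_reflect[of G pl c, OF G_periodic])
  also have "\<dots> = (\<Prod>a\<in>{a\<in>{..<pl}. pidx d t = pidx d s \<longrightarrow> a \<noteq> 0}.
      eps ^ (a*ok) * hlam eps q Q d lam i j s t - 1)"
    unfolding prod.inter_filter[OF finite_lessThan]
    by (rule prod.cong[OF refl]) (auto simp: G_def dest: dvd_imp_le)
  also have "{a\<in>{..<pl}. pidx d t = pidx d s \<longrightarrow> a \<noteq> 0} = {a. a < pl \<and> (pidx d t = pidx d s \<longrightarrow> a \<noteq> 0)}"
    by auto
  finally show ?thesis .
qed

lemma inner_prod_translate:
  assumes d: "d \<ge> 1" and nz: "eps \<noteq> 0" and ep: "eps ^ (ok*pl) = 1"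
    and root: "repeats_root d ok pl lam" and s: "s \<in> {1..d*ok}" and c: "c < pl"
  shows "(\<Prod>t\<in>{t\<in>{1..d*ok*pl}. pidx d t \<noteq> pidx d (s + d*ok*c)}. hlam eps q Q d lam i j (s + d*ok*c) t - 1)
    = (\<Prod>t\<in>{1..d*ok}. \<Prod>a\<in>{a. a < pl \<and> (pidx d t = pidx d s \<longrightarrow> a \<noteq> 0)}.
          eps ^ (a*ok) * hlam eps q Q d lam i j s t - 1)"
proof -
  let ?H = "\<lambda>t. if pidx d t \<noteq> pidx d (s + d*ok*c) then hlam eps q Q d lam i j (s + d*ok*c) t - 1 else 1"
  have "(\<Prod>t\<in>{t\<in>{1..d*ok*pl}. pidx d t \<noteq> pidx d (s + d*ok*c)}. hlam eps q Q d lam i j (s + d*ok*c) t - 1)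
      = (\<Prod>t\<in>{1..d*ok*pl}. ?H t)"
    by (rule prod.inter_filter) simp
  also have "\<dots> = (\<Prod>e<pl. \<Prod>t\<in>{1..d*ok}. ?H (t + d*ok*e))" by (rule prod_regroup)
  also have "\<dots> = (\<Prod>t\<in>{1..d*ok}. \<Prod>e<pl. ?H (t + d*ok*e))" by (rule prod.swap)
  also have "\<dots> = (\<Prod>t\<in>{1..d*ok}. \<Prod>a\<in>{a. a < pl \<and> (pidx d t = pidx d s \<longrightarrow> a \<noteq> 0)}.
          eps ^ (a*ok) * hlam eps q Q d lam i j s t - 1)"
    by (rule prod.cong[OF refl], rule translates_prod[OF d nz ep root s _ c])
  finally show ?thesis .
qed

lemma cells_translate:
  assumes d: "d \<ge> 1" and ok: "ok \<ge> 1" and root: "repeats_root d ok pl lam"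
  defines "\<tau> \<equiv> (\<lambda>(x::nat\<times>nat\<times>nat, c::nat). (fst x, fst (snd x), snd (snd x) + d*ok*c))"
  shows "cells lam {1..d*ok*pl} = \<tau> ` (cells lam {1..d*ok} \<times> {..<pl})"
    "inj_on \<tau> (cells lam {1..d*ok} \<times> {..<pl})"
proof -
  have dk: "d*ok > 0" using d ok by simp
  show "inj_on \<tau> (cells lam {1..d*ok} \<times> {..<pl})"
  proof (rule inj_onI)
    fix u v assume u: "u \<in> cells lam {1..d*ok} \<times> {..<pl}" and v: "v \<in> cells lam {1..d*ok} \<times> {..<pl}"
      and e: "\<tau> u = \<tau> v"
    obtain i j s c where uu: "u = ((i,j,s),c)" by (metis prod.collapse)
    obtain i' j' s' c' where vv: "v = ((i',j',s'),c')" by (metis prod.collapse)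
    have r: "1 \<le> s" "s \<le> d*ok" "1 \<le> s'" "s' \<le> d*ok" using u v by (auto simp: uu vv cells_def)
    have "s + d*ok*c = s' + d*ok*c'" "i = i'" "j = j'" using e by (auto simp: uu vv \<tau>_def)
    then have "(s - 1) + (d*ok)*c = (s' - 1) + (d*ok)*c'" using r by (simp add: algebra_simps)
    then have "s - 1 = s' - 1 \<and> c = c'" by (subst (asm) add_mult_eq_iff) (use r in auto)
    then show "u = v" using r \<open>i = i'\<close> \<open>j = j'\<close> by (auto simp: uu vv)
  qed
  show "cells lam {1..d*ok*pl} = \<tau> ` (cells lam {1..d*ok} \<times> {..<pl})"
  proof
    show "\<tau> ` (cells lam {1..d*ok} \<times> {..<pl}) \<subseteq> cells lam {1..d*ok*pl}"
    proof
      fix x assume "x \<in> \<tau> ` (cells lam {1..d*ok} \<times> {..<pl})"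
      then obtain i j s c where h: "(i,j,s) \<in> cells lam {1..d*ok}" "c < pl" and xx: "x = \<tau> ((i,j,s),c)"
        by auto
      then have r: "s \<in> {1..d*ok}" "1 \<le> i" "1 \<le> j" "j \<le> part (lam s) i" by (auto simp: cells_def)
      have "d*ok*(c+1) \<le> d*ok*pl" using h(2) by (intro mult_le_mono2) simp
      then have "s + d*ok*c \<le> d*ok*pl" using r by (simp add: algebra_simps)
      then show "x \<in> cells lam {1..d*ok*pl}"
        using r repeats_rootD[OF root r(1) h(2)] xx by (auto simp: cells_def \<tau>_def)
    qed
    show "cells lam {1..d*ok*pl} \<subseteq> \<tau> ` (cells lam {1..d*ok} \<times> {..<pl})"
    proof
      fix x assume hx: "x \<in> cells lam {1..d*ok*pl}"
      obtain i j s' where xx: "x = (i,j,s')" by (metis prod_cases3)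
      have r: "1 \<le> s'" "s' \<le> d*ok*pl" "1 \<le> i" "1 \<le> j" "j \<le> part (lam s') i"
        using hx by (auto simp: xx cells_def)
      define c where "c = (s' - 1) div (d*ok)"
      define s where "s = (s' - 1) mod (d*ok) + 1"
      have ss: "s' = s + d*ok*c" using r by (simp add: s_def c_def)
      have sr: "s \<in> {1..d*ok}" using dk by (auto simp: s_def Suc_le_eq)
      have cp: "c < pl" using r dk by (simp add: c_def less_mult_imp_div_less mult.commute Suc_le_eq)
      have "lam s' = lam s" using repeats_rootD[OF root sr cp] ss by simp
      then have "((i,j,s),c) \<in> cells lam {1..d*ok} \<times> {..<pl}" using r sr cp by (auto simp: cells_def)
      moreover have "x = \<tau> ((i,j,s),c)" using ss xx by (simp add: \<tau>_def)
      ultimately show "x \<in> \<tau> ` (cells lam {1..d*ok} \<times> {..<pl})" by blast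
    qed
  qed
qed

lemma cell_prod_fold:
  assumes d: "d \<ge> 1" and ok: "ok \<ge> 1" and nz: "eps \<noteq> 0" and ep: "eps ^ (ok*pl) = 1"
    and root: "repeats_root d ok pl lam"
  shows "(\<Prod>(i,j,s)\<in>cells lam {1..d*ok*pl}. \<Prod>t\<in>{t\<in>{1..d*ok*pl}. pidx d t \<noteq> pidx d s}.
           hlam eps q Q d lam i j s t - 1)
    = (\<Prod>(i,j,s)\<in>cells lam {1..d*ok}. \<Prod>t\<in>{1..d*ok}. \<Prod>a\<in>{a. a < pl \<and> (pidx d t = pidx d s \<longrightarrow> a \<noteq> 0)}.
          eps ^ (a*ok) * hlam eps q Q d lam i j s t - 1) ^ pl"
proof -
  define \<tau> where "\<tau> = (\<lambda>(x::nat\<times>nat\<times>nat, c::nat). (fst x, fst (snd x), snd (snd x) + d*ok*c))"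
  note cells = cells_translate[OF d ok root, folded \<tau>_def]
  define F where "F = (\<lambda>(i,j,s). \<Prod>t\<in>{t\<in>{1..d*ok*pl}. pidx d t \<noteq> pidx d s}. hlam eps q Q d lam i j s t - 1)"
  define Y where "Y = (\<lambda>(i,j,s). \<Prod>t\<in>{1..d*ok}. \<Prod>a\<in>{a. a < pl \<and> (pidx d t = pidx d s \<longrightarrow> a \<noteq> 0)}.
          eps ^ (a*ok) * hlam eps q Q d lam i j s t - 1)"
  have "prod F (cells lam {1..d*ok*pl}) = prod (F \<circ> \<tau>) (cells lam {1..d*ok} \<times> {..<pl})"
    unfolding cells(1) by (rule prod.reindex[OF cells(2)])
  also have "\<dots> = (\<Prod>x\<in>cells lam {1..d*ok}. \<Prod>c<pl. F (\<tau> (x,c)))"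
    by (simp add: prod.cartesian_product)
  also have "\<dots> = (\<Prod>x\<in>cells lam {1..d*ok}. Y x ^ pl)"
  proof (rule prod.cong[OF refl])
    fix x assume x: "x \<in> cells lam {1..d*ok}"
    obtain i j s where xx: "x = (i,j,s)" by (metis prod_cases3)
    have s: "s \<in> {1..d*ok}" using x xx by (auto simp: cells_def)
    have "F (\<tau> (x,c)) = Y x" if "c < pl" for c
      unfolding xx \<tau>_def F_def Y_def using inner_prod_translate[OF d nz ep root s that] by simp
    then show "(\<Prod>c<pl. F (\<tau> (x,c))) = Y x ^ pl" by simp
  qed
  also have "\<dots> = prod Y (cells lam {1..d*ok}) ^ pl" by (simp add: prod_power_distrib)
  finally show ?thesis unfolding F_def Y_def .
qed

section \<open>The statistic \<open>\<beta>\<close> of a repeated partition\<close>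

lemma sum_list_concat_nat: "sum_list (concat xss) = sum_list (map sum_list (xss :: nat list list))"
  by (induction xss) auto

lemma sum_list_sort_nat: "sum_list (sort (xs :: nat list)) = sum_list xs"
  by (metis mset_sort sum_mset_sum_list)

lemma sum_list_concat_upt:
  "sum_list (concat (map (lam :: nat \<Rightarrow> nat list) [1..<m+1])) = (\<Sum>s\<in>{1..m}. sum_list (lam s))"
proof -
  have "sum_list (concat (map lam [1..<m+1])) = sum_list (map (\<lambda>s. sum_list (lam s)) [1..<m+1])"
    by (simp add: sum_list_concat_nat o_def del: upt_Suc)
  also have "\<dots> = (\<Sum>s\<in>{1..m}. sum_list (lam s))"
  proof -
    have "set [1..<m+1] = {1..m}" by auto
    then show ?thesis by (subst sum_list_distinct_conv_sum_set) (simp_all del: upt_Suc)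
  qed
  finally show ?thesis .
qed

text \<open>Prepending a part shifts every other part one row down.\<close>
lemma beta_Cons: "beta (x # ys) = beta ys + sum_list ys"
proof -
  have "beta (x # ys) = (\<Sum>i<length ys. Suc i * ys ! i)"
    unfolding beta_def by (simp add: sum.lessThan_Suc_shift del: sum.lessThan_Suc)
  also have "\<dots> = beta ys + (\<Sum>i<length ys. ys ! i)" by (simp add: beta_def sum.distrib)
  also have "(\<Sum>i<length ys. ys ! i) = sum_list ys" by (simp add: sum_list_sum_nth atLeast0LessThan)
  finally show ?thesis .
qed

lemma beta_replicate_append:
  "2 * beta (replicate k x @ zs) + k*x = k*k*x + 2*k*sum_list zs + 2*beta zs"
proof (induction k)
  case 0 then show ?case by simp
next
  case (Suc k)
  have "beta (replicate (Suc k) x @ zs) = beta (replicate k x @ zs) + k*x + sum_list zs"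
    by (simp add: beta_Cons sum_list_replicate)
  then show ?case using Suc by (simp add: algebra_simps)
qed

lemma beta_repeat_parts:
  "2 * beta (concat (map (replicate k) ys)) + k * sum_list ys = 2*k*k*beta ys + k*k*sum_list ys"
proof (induction ys)
  case Nil then show ?case by (simp add: beta_def)
next
  case (Cons y ys)
  have "sum_list (concat (map (replicate k) ys)) = k * sum_list ys"
    by (induction ys) (auto simp: sum_list_replicate algebra_simps)
  then have "2 * beta (replicate k y @ concat (map (replicate k) ys)) + k*y
     = k*k*y + 2*k*(k * sum_list ys) + 2*beta (concat (map (replicate k) ys))"
    using beta_replicate_append[of k y "concat (map (replicate k) ys)"] by simp
  then show ?case using Cons by (simp add: beta_Cons algebra_simps)
qed

lemma upt_shift: "[i+a..<j+a] = map (\<lambda>s. s + a) [i..<j]"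
  by (induction j) (auto simp: upt_Suc)

lemma mset_repeats_root:
  assumes root: "repeats_root d ok pl lam" and "c \<le> pl"
  shows "mset (concat (map lam [1..<d*ok*c+1])) = repeat_mset c (mset (concat (map lam [1..<d*ok+1])))"
  using assms(2)
proof (induction c)
  case 0 then show ?case by simp
next
  case (Suc c)
  have "[1..<d*ok*Suc c + 1] = [1..<d*ok*c+1] @ [1 + d*ok*c..<(d*ok + 1) + d*ok*c]"
    using upt_add_eq_append[of 1 "d*ok*c+1" "d*ok"] by (simp add: algebra_simps)
  also have "[1 + d*ok*c..<(d*ok + 1) + d*ok*c] = map (\<lambda>s. s + d*ok*c) [1..<d*ok+1]"
    by (rule upt_shift)
  finally have split: "[1..<d*ok*Suc c + 1] = [1..<d*ok*c+1] @ map (\<lambda>s. s + d*ok*c) [1..<d*ok+1]" .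
  have "map lam (map (\<lambda>s. s + d*ok*c) [1..<d*ok+1]) = map lam [1..<d*ok+1]"
    using repeats_rootD[OF root] Suc.prems by (auto simp del: upt_Suc)
  then have "mset (concat (map lam [1..<d*ok*Suc c + 1]))
      = mset (concat (map lam [1..<d*ok*c+1])) + mset (concat (map lam [1..<d*ok+1]))"
    unfolding split by (simp only: map_append concat_append mset_append)
  then show ?case using Suc by (simp del: upt_Suc add: add.commute)
qed

text \<open>Hence the sorted list of all parts of \<open>lam\<close> is that of the root with each part repeated
  \<open>pl\<close> times, and its \<open>beta\<close> is determined by that of the root.\<close>
lemma beta_arrow_repeats_root:
  assumes root: "repeats_root d ok pl lam"
  shows "2 * beta (arrow (map lam [1..<d*ok*pl+1])) + pl * sum_list (concat (map lam [1..<d*ok+1]))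
    = 2*pl*pl*beta (arrow (map lam [1..<d*ok+1])) + pl*pl*sum_list (concat (map lam [1..<d*ok+1]))"
proof -
  let ?L = "concat (map lam [1..<d*ok+1])"
  have "sort (concat (map lam [1..<d*ok*pl+1])) = concat (map (replicate pl) (sort ?L))"
  proof (rule properties_for_sort)
    have "mset (concat (map (replicate pl) xs)) = repeat_mset pl (mset xs)" for xs :: "nat list"
      by (induction xs) auto
    then show "mset (concat (map (replicate pl) (sort ?L))) = mset (concat (map lam [1..<d*ok*pl+1]))"
      using mset_repeats_root[OF root order.refl] by (simp del: upt_Suc)
    have "sorted (concat (map (replicate pl) xs))" if "sorted xs" for xs :: "nat list"
      using that by (induction xs) (auto simp: sorted_append)
    then show "sorted (concat (map (replicate pl) (sort ?L)))" by (simp del: upt_Suc)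
  qed
  moreover have "rev (concat (map (replicate pl) xs)) = concat (map (replicate pl) (rev xs))" for xs :: "nat list"
    by (induction xs) auto
  ultimately have "arrow (map lam [1..<d*ok*pl+1]) = concat (map (replicate pl) (arrow (map lam [1..<d*ok+1])))"
    by (simp add: arrow_def del: upt_Suc)
  moreover have "sum_list (arrow (map lam [1..<d*ok+1])) = sum_list ?L"
    by (simp add: arrow_def sum_list_sort_nat del: upt_Suc)
  ultimately show ?thesis using beta_repeat_parts[of pl "arrow (map lam [1..<d*ok+1])"] by simp
qed

lemma two_ell_w: "2 * ell_w p b + (\<Sum>i=1..p. b i ^ 2) = (\<Sum>i=1..p. b i) ^ 2"
proof (induction p)
  case 0 then show ?case by (simp add: ell_w_def)
next
  case (Suc p)
  have "(\<Sum>i=1..p. \<Sum>j=i+1..Suc p. b i * b j) = (\<Sum>i=1..p. (\<Sum>j=i+1..p. b i * b j) + b i * b (Suc p))"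
    by (rule sum.cong[OF refl]) simp
  then have "ell_w (Suc p) b = ell_w p b + (\<Sum>i=1..p. b i) * b (Suc p)"
    by (simp add: ell_w_def sum.distrib sum_distrib_right)
  then show ?case using Suc by (simp add: power2_eq_square algebra_simps)
qed

section \<open>The exponents of \<open>f_lam\<close> and \<open>g_lam\<close>\<close>

lemma block_sizes_sum:
  assumes "k \<le> p"
  shows "(\<Sum>t\<in>{1..k}. sum_list (map sum_list (blk p d lam t))) = (\<Sum>s\<in>{1..d*k}. sum_list (lam s))"
proof -
  have "(\<Sum>t\<in>{1..k}. sum_list (map sum_list (blk p d lam t)))
      = (\<Sum>c<k. sum_list (map sum_list (blk p d lam (1 + c))))"
    using sum_regroup[of "\<lambda>t. sum_list (map sum_list (blk p d lam t))" 1 k] by simp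
  also have "\<dots> = (\<Sum>c<k. \<Sum>s\<in>{1..d}. sum_list (lam (s + d*c)))"
  proof (rule sum.cong[OF refl])
    fix c assume "c \<in> {..<k}"
    then have "blk p d lam (1 + c) = map (\<lambda>s. lam (s + d*c)) [1..<d+1]"
      unfolding blk_def using assms by (simp add: algebra_simps del: upt_Suc)
    then show "sum_list (map sum_list (blk p d lam (1 + c))) = (\<Sum>s\<in>{1..d}. sum_list (lam (s + d*c)))"
      using sum_list_concat_upt[of "\<lambda>s. lam (s + d*c)" d] by (simp add: sum_list_concat_nat o_def del: upt_Suc)
  qed
  also have "\<dots> = (\<Sum>s\<in>{1..d*k}. sum_list (lam s))" by (rule sum_regroup[symmetric])
  finally show ?thesis .
qed

lemma even_mult_pred: "even ((x::int) * (x - 1))"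
  by (cases "even x") auto

locale comp_multipartition =
  fixes p d n :: nat and b :: "nat \<Rightarrow> nat" and lam :: "nat \<Rightarrow> nat list"
  assumes p_pos: "p > 0" and d_pos: "d \<ge> 1"
    and comp: "is_comp p n b" and lam_in: "lam \<in> Pdb p d b"
begin

abbreviation ok :: nat where "ok \<equiv> olam p d lam"
abbreviation pl :: nat where "pl \<equiv> plam p d lam"

definition root_size :: nat where "root_size = (\<Sum>t\<in>{1..ok}. b t)"
definition root_weight :: nat where "root_weight = (\<Sum>t\<in>{1..ok}. t * b t)"

lemma p_eq: "p = ok * pl" and ok_pos: "ok \<ge> 1" and pl_pos: "pl \<ge> 1"
proof -
  show "p = ok * pl" using olam_props(2)[OF p_pos] by (simp add: plam_def)
  then have "0 < ok * pl" using p_pos by simp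
  then show "ok \<ge> 1" "pl \<ge> 1" by (simp_all add: Suc_le_eq)
qed

lemma root: "repeats_root d ok pl lam"
  by (rule repeats_root_olam[OF p_pos d_pos])

lemma block_size: "t \<in> {1..p} \<Longrightarrow> sum_list (map sum_list (blk p d lam t)) = b t"
  using lam_in by (simp add: Pdb_def)

lemma blk_periodic: "t \<ge> 1 \<Longrightarrow> blk p d lam (t + ok*c) = blk p d lam t"
  using blk_shift_mult[OF olam_props(3)[OF p_pos]] by (simp add: add.commute)

lemma root_translate_le: "t \<in> {1..ok} \<Longrightarrow> c < pl \<Longrightarrow> t + ok*c \<le> p"
proof -
  assume "t \<in> {1..ok}" "c < pl"
  moreover have "ok*(c+1) \<le> ok*pl" using \<open>c < pl\<close> by (intro mult_le_mono2) simp
  ultimately show ?thesis using p_eq by (simp add: algebra_simps)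
qed

text \<open>The composition \<open>b\<close> inherits the period \<open>ok\<close> from the blocks.\<close>
lemma b_periodic: "t \<in> {1..ok} \<Longrightarrow> c < pl \<Longrightarrow> b (t + ok*c) = b t"
  using block_size[of t] block_size[of "t + ok*c"] blk_periodic[of t c] root_translate_le[of t c]
  by auto

lemma n_eq: "n = pl * root_size"
  using comp sum_periodic[of ok pl b, OF b_periodic] p_eq by (simp add: is_comp_def root_size_def)

lemma nlam_eq: "nlam p d n lam = root_size"
  using pl_pos by (simp add: nlam_def n_eq)

lemma two_alpha_comp: "2 * alpha_comp p b = 2 * pl * root_weight + ok * (pl * (pl - 1)) * root_size"
  using sum_periodic_weighted[of ok pl b, OF b_periodic] p_eq
  by (simp add: alpha_comp_def root_weight_def root_size_def)

lemma two_ell_w_root: "2 * ell_w p b + pl * (\<Sum>t\<in>{1..ok}. b t ^ 2) = n ^ 2"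
  using two_ell_w[of p b] sum_periodic[of ok pl "\<lambda>t. b t ^ 2"] b_periodic comp p_eq
  by (simp add: is_comp_def)

lemma beta_blocks: "(\<Sum>a=1..p. beta (arrow (blk p d lam a))) = pl * (\<Sum>a=1..ok. beta (arrow (blk p d lam a)))"
  using sum_periodic[of ok pl "\<lambda>a. beta (arrow (blk p d lam a))"] blk_periodic p_eq by simp

lemma beta_all:
  "2 * beta (arrow (map lam [1..<p*d+1])) + pl * root_size
    = 2*pl*pl*beta (arrow (map lam [1..<d*ok+1])) + pl*pl*root_size"
proof -
  have "ok \<le> p" using p_eq pl_pos by (metis mult_le_mono2 mult.right_neutral)
  then have "(\<Sum>t\<in>{1..ok}. sum_list (map sum_list (blk p d lam t))) = root_size"
    unfolding root_size_def using block_size by (intro sum.cong) auto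
  then have "sum_list (concat (map lam [1..<d*ok+1])) = root_size"
    using sum_list_concat_upt[of lam "d*ok"] block_sizes_sum[OF \<open>ok \<le> p\<close>, of d lam]
    by (simp del: upt_Suc)
  then show ?thesis
    using beta_arrow_repeats_root[OF root] p_eq by (simp add: algebra_simps del: upt_Suc)
qed

text \<open>\<open>gamma_lam\<close> is an integer: \<open>2 qexp = pl X\<close> with \<open>X\<close> even, by the identities above.\<close>
lemma plam_dvd_qexp: "int pl dvd qexp p d b lam"
proof -
  define M where "M = int root_size"
  define S2 where "S2 = int (\<Sum>t\<in>{1..ok}. b t ^ 2)"
  define Bs where "Bs = int (\<Sum>a=1..ok. beta (arrow (blk p d lam a)))"
  define Bm where "Bm = int (beta (arrow (map lam [1..<d*ok+1])))"
  define X where "X = int pl * (M * (M - 1)) + 2 * M - (S2 + M) - 2 * int pl * Bm + 2 * Bs"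
  have ell: "2 * int (ell_w p b) + int pl * S2 = (int pl * M) ^ 2"
    using arg_cong[OF two_ell_w_root, of int] n_eq by (simp add: S2_def M_def)
  have beta: "2 * int (beta (arrow (map lam [1..<p*d+1]))) + int pl * M = 2*int pl*int pl*Bm + int pl*int pl*M"
    using arg_cong[OF beta_all, of int] by (simp add: Bm_def M_def del: upt_Suc)
  have blocks: "(\<Sum>a=1..p. int (beta (arrow (blk p d lam a)))) = int pl * Bs"
    using arg_cong[OF beta_blocks, of int] by (simp add: Bs_def)
  have two_qexp: "2 * qexp p d b lam = int pl * X"
    unfolding qexp_def blocks X_def using ell beta by (simp add: algebra_simps power2_eq_square)
  have "even X"
  proof -
    have "even (\<Sum>t\<in>{1..ok}. b t ^ 2 + b t)" by (intro dvd_sum) (simp add: power2_eq_square)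
    then have "even (S2 + M)"
      by (simp add: S2_def M_def root_size_def sum.distrib del: of_nat_sum flip: of_nat_add)
    moreover have "even (M * (M - 1))" by (rule even_mult_pred)
    ultimately show ?thesis by (simp add: X_def)
  qed
  then obtain Y where "X = 2 * Y" by (rule evenE)
  then have "qexp p d b lam = int pl * Y" using two_qexp by simp
  then show ?thesis by simp
qed

lemma gamma_lam_eq: "gamma_lam p d b lam = of_int (qexp p d b lam div int pl)"
  using plam_dvd_qexp pl_pos by (auto simp: gamma_lam_def of_int_div)

definition alpha_int :: int where
  "alpha_int = int d * (int root_size * ((int p * (int p - 1)) div 2)) - int d * int root_weight"

lemma alpha_lam_eq: "alpha_lam p d n b lam = of_int alpha_int"
proof -
  have "rat_of_nat (2 * alpha_comp p b) = of_nat (2 * pl * root_weight + ok * (pl * (pl - 1)) * root_size)"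
    by (simp only: two_alpha_comp)
  then have a: "of_nat (alpha_comp p b) = of_nat pl * of_nat root_weight
      + of_nat ok * (of_nat pl * (of_nat pl - 1)) * (of_nat root_size :: rat) / 2"
    using pl_pos by (simp add: of_nat_diff field_simps)
  have "2 * ((int p * (int p - 1)) div 2) = int p * (int p - 1)"
    by (rule even_two_times_div_two[OF even_mult_pred])
  then have "2 * rat_of_int ((int p * (int p - 1)) div 2) = of_int (int p * (int p - 1))"
    by (metis of_int_mult of_int_numeral)
  then have k: "rat_of_int ((int p * (int p - 1)) div 2) = of_nat p * (of_nat p - 1) / 2"
    by simp
  have p: "rat_of_nat p = of_nat ok * of_nat pl" by (metis p_eq of_nat_mult)
  have "of_nat pl \<noteq> (0::rat)" using pl_pos by simp
  then show ?thesis
    unfolding alpha_lam_def nlam_eq alpha_int_def of_int_diff of_int_mult k of_nat_mult a p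
    by (simp add: field_simps)
qed

lemma eps_exponent_split:
  "(int (p*d) * int n * (int p - 1)) div 2 - int d * int (alpha_comp p b)
    = (int d * int ok * int n * (1 - int pl)) div 2 + alpha_int * int pl"
proof -
  obtain w where w: "int p * (int p - 1) = 2 * w" using even_mult_pred by (rule evenE)
  obtain v where v: "int pl * (int pl - 1) = 2 * v" using even_mult_pred by (rule evenE)
  have a: "int (alpha_comp p b) = int pl * int root_weight + int ok * v * int root_size"
    using arg_cong[OF two_alpha_comp, of int] pl_pos v by (simp add: of_nat_diff)
  have n: "int n = int pl * int root_size" using n_eq by simp
  have K: "alpha_int = int d * int root_size * w - int d * int root_weight"
    using w by (simp add: alpha_int_def)
  have f_exp: "int (p*d) * int n * (int p - 1) = 2 * (int d * int n * w)"
    using w by (simp add: algebra_simps)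
  have "int d * int ok * int n * (1 - int pl) = - int d * int ok * int root_size * (int pl * (int pl - 1))"
    unfolding n by (simp add: algebra_simps)
  then have g_exp: "int d * int ok * int n * (1 - int pl) = 2 * (- int d * int ok * int root_size * v)"
    unfolding v by simp
  have "int d * int n * w - int d * int (alpha_comp p b)
      = - int d * int ok * int root_size * v + alpha_int * int pl"
    unfolding K a n by (simp add: algebra_simps)
  then show ?thesis unfolding f_exp g_exp by simp
qed

text \<open>The factorization \<open>f_lam = eps^(d ok n (1 - pl) / 2) * g_lam^pl\<close>, valid for every \<open>eps\<close>
  with \<open>eps^p = 1\<close>: the cell products match by the folding lemma, the remaining factors by
  the exponent identities.\<close>
lemma f_lam_factorization:
  assumes eps: "eps ^ p = 1"
  shows "f_lam p d n b lam eps q Q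
    = eps powi ((int d * int ok * int n * (1 - int pl)) div 2) * g_lam p d n b lam eps q Q ^ pl"
proof -
  have nz: "eps \<noteq> 0" using eps p_pos by (metis power_0_left less_not_refl2 zero_neq_one)
  define PQ where "PQ = (\<Prod>i=1..d. Q i)"
  define Pg where "Pg = (\<Prod>(i,j,s)\<in>cells lam {1..d*ok}. \<Prod>t\<in>{1..d*ok}.
      \<Prod>a\<in>{a. a < pl \<and> (pidx d t = pidx d s \<longrightarrow> a \<noteq> 0)}. (eps ^ (a*ok) * hlam eps q Q d lam i j s t - 1))"
  define G where "G = qexp p d b lam div int pl"
  have qexp: "qexp p d b lam = G * int pl" using plam_dvd_qexp by (simp add: G_def)
  have PQ: "PQ ^ (n*(p-1)) = (PQ ^ (root_size*(p-1))) ^ pl"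
    by (simp add: n_eq flip: power_mult) (simp add: mult_ac)
  have pd: "p*d = d*ok*pl" using p_eq by simp
  have ep: "eps ^ (ok*pl) = 1" by (simp only: p_eq[symmetric] eps)
  have "f_lam p d n b lam eps q Q = eps powi ((int (p*d) * int n * (int p - 1)) div 2 - int d * int (alpha_comp p b))
      * q powi qexp p d b lam * PQ ^ (n*(p-1)) * Pg ^ pl"
    unfolding f_lam_def PQ_def Pg_def cell_prod_fold[OF d_pos ok_pos nz ep root, folded pd] ..
  also have "\<dots> = eps powi ((int d * int ok * int n * (1 - int pl)) div 2)
      * (eps powi alpha_int * q powi G * PQ ^ (root_size*(p-1)) * Pg) ^ pl"
    unfolding eps_exponent_split qexp PQ
    by (simp add: power_int_add[OF disjI1[OF nz]] power_mult_distrib power_int_power' mult_ac)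
  also have "eps powi alpha_int * q powi G * PQ ^ (root_size*(p-1)) * Pg = g_lam p d n b lam eps q Q"
    unfolding g_lam_def Let_def alpha_lam_eq gamma_lam_eq nlam_eq by (simp add: G_def PQ_def Pg_def)
  finally show ?thesis .
qed

end

theorem theorem3p12:
  fixes p d n :: nat and b :: "nat \<Rightarrow> nat" and lam :: "nat \<Rightarrow> nat list"
    and eps q :: complex and Q :: "nat \<Rightarrow> complex"
  assumes "p > 1" and "d \<ge> 1" and "n \<ge> 3"
    and "is_comp p n b" and "lam \<in> Pdb p d b"
    and "eps ^ p = 1" and "\<forall>k. 0 < k \<and> k < p \<longrightarrow> eps ^ k \<noteq> 1"
    and "q \<noteq> 0" and "\<forall>i\<in>{1..d}. Q i \<noteq> 0"
  shows "gamma_lam p d b lam \<in> \<int> \<and> alpha_lam p d n b lam \<in> \<int>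
    \<and> in_Zring d eps (g_lam p d n b lam eps)
    \<and> f_lam p d n b lam eps q Q =
        eps powi ((int d * int (olam p d lam) * int n * (1 - int (plam p d lam))) div 2)
        * g_lam p d n b lam eps q Q ^ plam p d lam"
proof -
  have p_pos: "p > 0" using assms(1) by simp
  interpret comp_multipartition p d n b lam
    by unfold_locales (use p_pos assms(2,4,5) in auto)
  show ?thesis
    using gamma_lam_eq alpha_lam_eq in_Zring_g_lam[OF assms(6) p_pos assms(2)]
      f_lam_factorization[OF assms(6)]
    by auto
qed
end
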